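(* In the type $\mathbb A$ setting described in the context, for all $0\le i\le m-2$ we have $$x_{i+2}=x_1[i+1]\,x_{i+1}-x_i\qquad\text{and}\qquad x_{i+1}[1]=x_1[i+1]\,x_i[1]-x_{i-1}[1],$$ where $x_j=x_j[0]$.
   Context: Let $K$ be a field of characteristic $0$ or $K=\mathbb Z$, let $n\ge1$, $m=n+1$, $p=n$, and $\mathcal F=K(X_1,\dots,X_m)$. Let $B=(b_{ij})\in M_{m,n}(\mathbb Z)$ have $b_{i,i+1}=-1$ for $1\le i\le n-1$, $b_{i+1,i}=1$ for $1\le i\le n$, and all other entries $0$. Let $\mathbf x=(x_1,\dots,x_m)$ be algebraically independent over $K$ in $\mathcal F$. For $1\le k\le n$ the mutation $\mu_k(\mathbf y,C)=(\mathbf y',C')$ of a pair $(\mathbf y,C)$ is given by $c'_{ij}=-c_{ij}$ if $i=k$ or $j=k$, and $c'_{ij}=c_{ij}+\frac{|c_{ik}|c_{kj}+c_{ik}|c_{kj}|}{2}$ otherwise; $y'_s=y_s$ for $s\neq k$ and $y'_k=y_k^{-1}\big(\prod_{c_{ik}>0}y_i^{c_{ik}}+\prod_{c_{ik}<0}y_i^{-c_{ik}}\big)$. Set $(\mathbf x[0],B[0])=(\mathbf x,B)$ and, for $1\le i\le m-1$, $(\mathbf x[i],B[i])=\mu_{m-i}\cdots\mu_2\mu_1(\mathbf x[i-1],B[i-1])$ (apply $\mu_1$ first). Write $\mathbf x[i]=(x_1[i],\dots,x_m[i])$ and use the conventions $x_0[i]=1$, $x_{-1}[i]=0$ for all $i$.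 *)

theory Defs
  imports Main "HOL.Complex_Main"
begin

text \<open>A seed: a cluster vector y (indices 1..m used) and an exchange matrix C
  (rows 1..m, columns 1..n used).\<close>
type_synonym 'a seed = "(nat \<Rightarrow> 'a) \<times> (nat \<Rightarrow> nat \<Rightarrow> int)"

definition mut_matrix :: "nat \<Rightarrow> (nat \<Rightarrow> nat \<Rightarrow> int) \<Rightarrow> (nat \<Rightarrow> nat \<Rightarrow> int)" where
  "mut_matrix k C = (\<lambda>i j. if i = k \<or> j = k then - C i j
      else C i j + (\<bar>C i k\<bar> * C k j + C i k * \<bar>C k j\<bar>) div 2)"

definition mut_vector :: "nat \<Rightarrow> nat \<Rightarrow> (nat \<Rightarrow> 'a::field) \<Rightarrow> (nat \<Rightarrow> nat \<Rightarrow> int) \<Rightarrow> (nat \<Rightarrow> 'a)" where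
  "mut_vector m k y C = (\<lambda>s. if s = k then
      inverse (y k) * ((\<Prod>i\<in>{1..m}. if C i k > 0 then y i ^ nat (C i k) else 1)
                     + (\<Prod>i\<in>{1..m}. if C i k < 0 then y i ^ nat (- C i k) else 1))
    else y s)"

definition mu :: "nat \<Rightarrow> nat \<Rightarrow> 'a::field seed \<Rightarrow> 'a seed" where
  "mu m k S = (mut_vector m k (fst S) (snd S), mut_matrix k (snd S))"

definition mu_seq :: "nat \<Rightarrow> nat list \<Rightarrow> 'a::field seed \<Rightarrow> 'a seed" where
  "mu_seq m ks S = foldl (\<lambda>T k. mu m k T) S ks"

text \<open>The type A exchange matrix B (m = n+1 rows, n columns).\<close>
definition typeA_B :: "nat \<Rightarrow> nat \<Rightarrow> nat \<Rightarrow> int" where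
  "typeA_B n i j = (if 1 \<le> i \<and> i \<le> n - 1 \<and> j = i + 1 then -1
                    else if 1 \<le> j \<and> j \<le> n \<and> i = j + 1 then 1 else 0)"

text \<open>(x[i], B[i]): seed 0 = (x,B); seed (i+1) = \<mu>_{m-(i+1)} ... \<mu>_2 \<mu>_1 (seed i), m = n+1.\<close>
fun seedA :: "nat \<Rightarrow> (nat \<Rightarrow> 'a::field) \<Rightarrow> nat \<Rightarrow> 'a seed" where
  "seedA n x 0 = (x, typeA_B n)"
| "seedA n x (Suc i) = mu_seq (n + 1) [1..<(n + 1) - i] (seedA n x i)"

text \<open>x_j[i] with conventions x_0[i] = 1, x_{-1}[i] = 0.\<close>
definition xA :: "nat \<Rightarrow> (nat \<Rightarrow> 'a::field) \<Rightarrow> int \<Rightarrow> nat \<Rightarrow> 'a" where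
  "xA n x j i = (if j = 0 then 1 else if j = -1 then 0 else fst (seedA n x i) (nat j))"

text \<open>K is a subring (contains 1, closed under +, -, *): covers both a subfield and (the image of) \<int>.\<close>
definition subring_set :: "'a::comm_ring_1 set \<Rightarrow> bool" where
  "subring_set K \<longleftrightarrow> 1 \<in> K \<and> (\<forall>a\<in>K. \<forall>b\<in>K. a + b \<in> K \<and> a - b \<in> K \<and> a * b \<in> K)"

text \<open>x_1..x_m algebraically independent over K: no nontrivial polynomial relation
  with coefficients in K (monomials = exponent vectors supported on {1..m}).\<close>
definition alg_indep :: "'a::comm_ring_1 set \<Rightarrow> nat \<Rightarrow> (nat \<Rightarrow> 'a) \<Rightarrow> bool" where
  "alg_indep K m x \<longleftrightarrow>
    (\<forall>c :: (nat \<Rightarrow> nat) \<Rightarrow> 'a.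
       finite {\<alpha>. c \<alpha> \<noteq> 0} \<and> (\<forall>\<alpha>. c \<alpha> \<in> K) \<and>
       (\<forall>\<alpha>. c \<alpha> \<noteq> 0 \<longrightarrow> (\<forall>i. i \<notin> {1..m} \<longrightarrow> \<alpha> i = 0)) \<and>
       (\<Sum>\<alpha>\<in>{\<alpha>. c \<alpha> \<noteq> 0}. c \<alpha> * (\<Prod>i\<in>{1..m}. x i ^ \<alpha> i)) = 0
       \<longrightarrow> (\<forall>\<alpha>. c \<alpha> = 0))"

end

theory Submission
  imports Defs
begin

text \<open>In round r the exchange matrix stays the matrix of a path with some edges reversed, and
  mutating at 1, \<dots>, n - r in turn gives x_k[r+1] = (x_{k-1}[r+1] x_{k+1}[r] + 1) / x_k[r].
  Writing X(u, v) = x_{v-u}[u], this says that every adjacent 2\<times>2 minor of the array X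
  equals 1. Comparing two adjacent minors sharing X(u+1, v) propagates the three-term recurrence
  X(u, v+1) + X(u, v-1) = X(v, v+1) X(u, v) from row u+1 to row u; rows 0 and 1 are the claim.
  The divisions are legitimate because every cluster variable is a quotient of polynomials with
  positive integer coefficients in the algebraically independent x_i, hence nonzero.\<close>

text \<open>The path 1 - \<dots> - n with frozen vertex n + 1; the sign s j orients the edge {j, j + 1}.\<close>

definition path_matrix :: "nat \<Rightarrow> (nat \<Rightarrow> int) \<Rightarrow> nat \<Rightarrow> nat \<Rightarrow> int" where
  "path_matrix n s i j =
    (if 1 \<le> i \<and> i + 1 \<le> n \<and> j = i + 1 then - s i
     else if 1 \<le> j \<and> j \<le> n \<and> i = j + 1 then s j else 0)"

lemma path_matrix_cong:
  "(\<And>j. 1 \<le> j \<Longrightarrow> j \<le> n \<Longrightarrow> s j = s' j) \<Longrightarrow> path_matrix n s = path_matrix n s'"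
  by (intro ext) (auto simp: path_matrix_def)

lemma typeA_B_eq_path_matrix: "typeA_B n = path_matrix n (\<lambda>_. 1)"
  by (intro ext) (auto simp: path_matrix_def typeA_B_def)

lemma path_matrix_succ: "path_matrix n s i (Suc i) = (if 1 \<le> i \<and> i < n then - s i else 0)"
  by (simp add: path_matrix_def)

lemma path_matrix_pred: "path_matrix n s (Suc j) j = (if 1 \<le> j \<and> j \<le> n then s j else 0)"
  by (simp add: path_matrix_def)

lemma path_matrix_eq_0: "j \<noteq> Suc i \<Longrightarrow> i \<noteq> Suc j \<Longrightarrow> path_matrix n s i j = 0"
  by (simp add: path_matrix_def)

lemma path_matrix_flip_row:
  assumes "1 \<le> k"
  shows "path_matrix n (s(k := - s k, k - 1 := - s (k - 1))) k j = - path_matrix n s k j"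
proof -
  consider "j = Suc k" | "k = Suc j" | "j \<noteq> Suc k" "k \<noteq> Suc j" by blast
  then show ?thesis
    by cases (use assms in \<open>simp_all add: path_matrix_succ path_matrix_pred path_matrix_eq_0\<close>)
qed

lemma path_matrix_flip_col:
  assumes "1 \<le> k"
  shows "path_matrix n (s(k := - s k, k - 1 := - s (k - 1))) i k = - path_matrix n s i k"
proof -
  consider "i = Suc k" | "k = Suc i" | "i \<noteq> Suc k" "k \<noteq> Suc i" by blast
  then show ?thesis
    by cases (use assms in \<open>simp_all add: path_matrix_succ path_matrix_pred path_matrix_eq_0\<close>)
qed

lemma path_matrix_flip_off:
  assumes "1 \<le> k" "i \<noteq> k" "j \<noteq> k"
  shows "path_matrix n (s(k := - s k, k - 1 := - s (k - 1))) i j = path_matrix n s i j"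
proof -
  consider "j = Suc i" | "i = Suc j" | "j \<noteq> Suc i" "i \<noteq> Suc j" by blast
  then show ?thesis
    by cases (use assms in \<open>simp_all add: path_matrix_succ path_matrix_pred path_matrix_eq_0\<close>)
qed

lemma path_matrix_col_mult_row_nonpos:
  assumes "i \<noteq> k" "j \<noteq> k" "k = 1 \<or> s (k - 1) = - s k"
  shows "path_matrix n s i k * path_matrix n s k j \<le> 0"
proof -
  have "path_matrix n s i k \<in> {0, s k}" "path_matrix n s k j \<in> {0, - s k}"
    using assms by (auto simp: path_matrix_def)
  then show ?thesis by auto
qed

lemma abs_mult_add_mult_abs_eq_0:
  fixes a b :: "'a::linordered_idom"
  assumes "a * b \<le> 0"
  shows "\<bar>a\<bar> * b + a * \<bar>b\<bar> = 0"
  using assms by (cases "a \<ge> 0"; cases "b \<ge> 0") (auto simp: mult_le_0_iff)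

text \<open>The hypothesis makes k a sink or a source, so no path i \<rightarrow> k \<rightarrow> j exists and mutation only
  negates row and column k.\<close>

lemma mut_matrix_path_matrix:
  assumes "1 \<le> k" "k = 1 \<or> s (k - 1) = - s k"
  shows "mut_matrix k (path_matrix n s) = path_matrix n (s(k := - s k, k - 1 := - s (k - 1)))"
proof (intro ext)
  fix i j
  show "mut_matrix k (path_matrix n s) i j =
      path_matrix n (s(k := - s k, k - 1 := - s (k - 1))) i j"
  proof (cases "i = k \<or> j = k")
    case True
    then show ?thesis
      using assms(1) path_matrix_flip_row path_matrix_flip_col by (auto simp: mut_matrix_def)
  next
    case False
    then show ?thesis
      using assms path_matrix_flip_off[of k i j n s] path_matrix_col_mult_row_nonpos[of i k j s n]
      by (simp add: mut_matrix_def abs_mult_add_mult_abs_eq_0)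
  qed
qed

lemma mut_vector_path_matrix:
  fixes y :: "nat \<Rightarrow> 'a::field"
  assumes k: "1 \<le> k" "k \<le> n" and s: "s k = 1" "2 \<le> k \<Longrightarrow> s (k - 1) = -1"
  shows "mut_vector (n + 1) k y (path_matrix n s) =
     y(k := inverse (y k) * ((if k = 1 then 1 else y (k - 1)) * y (k + 1) + 1))"
proof -
  have col: "path_matrix n s i k = (if (i + 1 = k \<and> 1 \<le> i) \<or> i = k + 1 then 1 else 0)" for i
    using k s by (auto simp: path_matrix_def)
  have "(\<Prod>i\<in>{1..n + 1}. if path_matrix n s i k > 0 then y i ^ nat (path_matrix n s i k) else 1)
        = (\<Prod>i\<in>{i \<in> {1..n + 1}. (i + 1 = k \<and> 1 \<le> i) \<or> i = k + 1}. y i)"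
    by (subst prod.inter_filter[symmetric]) (auto simp: col intro!: prod.cong)
  also have "{i \<in> {1..n + 1}. (i + 1 = k \<and> 1 \<le> i) \<or> i = k + 1} =
      (if k = 1 then {k + 1} else {k - 1, k + 1})"
    using k by auto
  finally have pos:
    "(\<Prod>i\<in>{1..n + 1}. if path_matrix n s i k > 0 then y i ^ nat (path_matrix n s i k) else 1) = (if k = 1 then 1 else y (k - 1)) * y (k + 1)"
    using k by auto
  have neg:
    "(\<Prod>i\<in>{1..n + 1}. if path_matrix n s i k < 0 then y i ^ nat (- path_matrix n s i k) else 1) = 1"
    by (rule prod.neutral) (simp add: col)
  show ?thesis unfolding mut_vector_def pos neg by auto
qed

text \<open>The cluster after mutating at 1, \<dots>, k in turn, starting from y.\<close>

fun sweep :: "(nat \<Rightarrow> 'a::field) \<Rightarrow> nat \<Rightarrow> nat \<Rightarrow> 'a" where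
  "sweep y 0 = y"
| "sweep y (Suc k) = (sweep y k)(Suc k := inverse (y (Suc k)) *
      ((if k = 0 then 1 else sweep y k k) * y (Suc (Suc k)) + 1))"

lemma sweep_beyond: "k < j \<Longrightarrow> sweep y k j = y j"
  by (induction k) auto

lemma sweep_within:
  "1 \<le> j \<Longrightarrow> j \<le> k \<Longrightarrow>
    sweep y k j = inverse (y j) * ((if j = 1 then 1 else sweep y k (j - 1)) * y (j + 1) + 1)"
  by (induction k) (auto simp: le_Suc_eq)

text \<open>Before round r the edges {j, j + 1} with j \<ge> n + 1 - r are reversed; after the
  mutations at 1, \<dots>, k of that round the edges below k are restored and {k, k + 1} is reversed.\<close>

definition round_signs :: "nat \<Rightarrow> nat \<Rightarrow> nat \<Rightarrow> int" where
  "round_signs n r j = (if n + 1 - r \<le> j then -1 else 1)"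

definition sweep_signs :: "nat \<Rightarrow> nat \<Rightarrow> nat \<Rightarrow> nat \<Rightarrow> int" where
  "sweep_signs n r k j = (if j < k then 1 else if j = k \<and> 1 \<le> k then -1 else round_signs n r j)"

lemma mu_seq_snoc: "mu_seq m (ks @ [k]) S = mu m k (mu_seq m ks S)"
  by (simp add: mu_seq_def)

lemma mu_sweep_step:
  fixes y :: "nat \<Rightarrow> 'a::field"
  assumes "Suc k \<le> n - r"
  shows "mu (n + 1) (Suc k) (sweep y k, path_matrix n (sweep_signs n r k)) =
    (sweep y (Suc k), path_matrix n (sweep_signs n r (Suc k)))"
proof -
  have k: "1 \<le> Suc k" "Suc k \<le> n" using assms by auto
  have signs: "sweep_signs n r k (Suc k) = 1" "2 \<le> Suc k \<Longrightarrow> sweep_signs n r k (Suc k - 1) = -1"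
    using assms by (auto simp: sweep_signs_def round_signs_def)
  have vector:
    "mut_vector (n + 1) (Suc k) (sweep y k) (path_matrix n (sweep_signs n r k)) = sweep y (Suc k)"
    using mut_vector_path_matrix[OF k signs, of "sweep y k"] by (simp add: sweep_beyond)
  have "Suc k = 1 \<or> sweep_signs n r k (Suc k - 1) = - sweep_signs n r k (Suc k)"
    using signs by (cases k) auto
  then have "mut_matrix (Suc k) (path_matrix n (sweep_signs n r k)) =
      path_matrix n ((sweep_signs n r k)(Suc k := - sweep_signs n r k (Suc k),
                                        Suc k - 1 := - sweep_signs n r k (Suc k - 1)))"
    by (intro mut_matrix_path_matrix) simp
  also have "\<dots> = path_matrix n (sweep_signs n r (Suc k))"
    using signs by (intro path_matrix_cong) (auto simp: sweep_signs_def)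
  finally show ?thesis
    by (simp only: mu_def fst_conv snd_conv vector)
qed

lemma mu_seq_sweep:
  fixes y :: "nat \<Rightarrow> 'a::field"
  assumes "k \<le> n - r"
  shows "mu_seq (n + 1) [1..<Suc k] (y, path_matrix n (round_signs n r)) =
    (sweep y k, path_matrix n (sweep_signs n r k))"
  using assms
proof (induction k)
  case 0
  have "sweep_signs n r 0 = round_signs n r" by (intro ext) (simp add: sweep_signs_def)
  then show ?case by (simp add: mu_seq_def)
next
  case (Suc k)
  then show ?case
    using mu_sweep_step[OF Suc.prems, of y] by (simp only: upt_Suc_append[of 1 "Suc k"] mu_seq_snoc)
qed

lemma seedA_step:
  assumes "r < n" "snd (seedA n x r) = path_matrix n (round_signs n r)"
  shows "seedA n x (Suc r) =
    (sweep (fst (seedA n x r)) (n - r), path_matrix n (round_signs n (Suc r)))"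
proof -
  have "seedA n x (Suc r) =
      mu_seq (n + 1) [1..<Suc (n - r)] (fst (seedA n x r), path_matrix n (round_signs n r))"
    using assms by (metis seedA.simps(2) prod.collapse Suc_diff_le less_imp_le Suc_eq_plus1)
  also have "\<dots> = (sweep (fst (seedA n x r)) (n - r), path_matrix n (sweep_signs n r (n - r)))"
    by (rule mu_seq_sweep) simp
  also have "path_matrix n (sweep_signs n r (n - r)) = path_matrix n (round_signs n (Suc r))"
    by (rule path_matrix_cong) (auto simp: sweep_signs_def round_signs_def)
  finally show ?thesis .
qed

lemma seedA_snd: "r \<le> n \<Longrightarrow> snd (seedA n x r) = path_matrix n (round_signs n r)"
proof (induction r)
  case 0
  show ?case
    by (simp add: typeA_B_eq_path_matrix) (rule path_matrix_cong, simp add: round_signs_def)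
next
  case (Suc r)
  then show ?case using seedA_step[of r n x] by simp
qed

lemma seedA_exchange:
  assumes "r < n" "1 \<le> k" "k \<le> n - r"
  shows "fst (seedA n x (Suc r)) k = inverse (fst (seedA n x r) k) *
    ((if k = 1 then 1 else fst (seedA n x (Suc r)) (k - 1)) * fst (seedA n x r) (k + 1) + 1)"
  using assms seedA_step[of r n x] seedA_snd[of r n x] by (simp add: sweep_within)

definition eval_monomial :: "nat \<Rightarrow> (nat \<Rightarrow> 'a::comm_ring_1) \<Rightarrow> (nat \<Rightarrow> nat) \<Rightarrow> 'a" where
  "eval_monomial m x \<alpha> = (\<Prod>i\<in>{1..m}. x i ^ \<alpha> i)"

text \<open>Values at x of nonzero polynomials in x 1, \<dots>, x m with natural coefficients; the exchange
  relation is subtraction-free, so cluster variables are quotients of such values.\<close>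

definition pos_poly_val :: "nat \<Rightarrow> (nat \<Rightarrow> 'a::comm_ring_1) \<Rightarrow> 'a \<Rightarrow> bool" where
  "pos_poly_val m x z \<longleftrightarrow> (\<exists>A c. finite A \<and> A \<noteq> {} \<and>
     (\<forall>\<alpha>\<in>A. 0 < (c \<alpha> :: nat) \<and> (\<forall>i. i \<notin> {1..m} \<longrightarrow> \<alpha> i = 0)) \<and>
     z = (\<Sum>\<alpha>\<in>A. of_nat (c \<alpha>) * eval_monomial m x \<alpha>))"

lemma eval_monomial_add:
  "eval_monomial m x (\<lambda>i. \<alpha> i + \<beta> i) = eval_monomial m x \<alpha> * eval_monomial m x \<beta>"
  by (simp add: eval_monomial_def power_add prod.distrib)

lemma pos_poly_val_one: "pos_poly_val m x 1"
  unfolding pos_poly_val_def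
  by (intro exI[of _ "{\<lambda>_. 0}"] exI[of _ "\<lambda>_. 1"]) (simp add: eval_monomial_def)

lemma pos_poly_val_var:
  assumes "i \<in> {1..m}"
  shows "pos_poly_val m x (x i)"
proof -
  define \<alpha> where "\<alpha> = (\<lambda>j. if j = i then 1 else 0 :: nat)"
  have "eval_monomial m x \<alpha> = x i"
    using assms by (simp add: eval_monomial_def \<alpha>_def power_0 if_distrib prod.delta cong: if_cong)
  then show ?thesis
    using assms unfolding pos_poly_val_def
    by (intro exI[of _ "{\<alpha>}"] exI[of _ "\<lambda>_. 1"]) (auto simp: \<alpha>_def)
qed

lemma pos_poly_val_add:
  assumes "pos_poly_val m x p" "pos_poly_val m x q"
  shows "pos_poly_val m x (p + q)"
proof -
  obtain A c where A: "finite A" "A \<noteq> {}" "\<forall>\<alpha>\<in>A. 0 < c \<alpha> \<and> (\<forall>i. i \<notin> {1..m} \<longrightarrow> \<alpha> i = 0)"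
    and p: "p = (\<Sum>\<alpha>\<in>A. of_nat (c \<alpha>) * eval_monomial m x \<alpha>)"
    using assms(1) unfolding pos_poly_val_def by blast
  obtain B d where B: "finite B" "B \<noteq> {}" "\<forall>\<alpha>\<in>B. 0 < d \<alpha> \<and> (\<forall>i. i \<notin> {1..m} \<longrightarrow> \<alpha> i = 0)"
    and q: "q = (\<Sum>\<alpha>\<in>B. of_nat (d \<alpha>) * eval_monomial m x \<alpha>)"
    using assms(2) unfolding pos_poly_val_def by blast
  define e where "e \<alpha> = (if \<alpha> \<in> A then c \<alpha> else 0) + (if \<alpha> \<in> B then d \<alpha> else 0)" for \<alpha>
  have "(\<Sum>\<alpha>\<in>A \<union> B. of_nat (e \<alpha>) * eval_monomial m x \<alpha>) =
      (\<Sum>\<alpha>\<in>A \<union> B. if \<alpha> \<in> A then of_nat (c \<alpha>) * eval_monomial m x \<alpha> else 0) +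
      (\<Sum>\<alpha>\<in>A \<union> B. if \<alpha> \<in> B then of_nat (d \<alpha>) * eval_monomial m x \<alpha> else 0)"
    unfolding sum.distrib[symmetric] by (rule sum.cong) (auto simp: e_def distrib_right)
  also have "\<dots> = p + q"
    unfolding p q using A(1) B(1)
    by (simp add: sum.inter_restrict[symmetric] Int_absorb1 Int_absorb2)
  finally show ?thesis
    unfolding pos_poly_val_def using A B
    by (intro exI[of _ "A \<union> B"] exI[of _ e]) (auto simp: e_def)
qed

lemma pos_poly_val_sum:
  assumes "finite A" "A \<noteq> {}" "\<And>a. a \<in> A \<Longrightarrow> pos_poly_val m x (f a)"
  shows "pos_poly_val m x (sum f A)"
  using assms by (induction A rule: finite_ne_induct) (auto intro: pos_poly_val_add)

lemma pos_poly_val_monomial_mult: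
  assumes "pos_poly_val m x q" "0 < c" "\<forall>i. i \<notin> {1..m} \<longrightarrow> \<alpha> i = 0"
  shows "pos_poly_val m x (of_nat c * eval_monomial m x \<alpha> * q)"
proof -
  obtain B d where B: "finite B" "B \<noteq> {}" "\<forall>\<beta>\<in>B. 0 < d \<beta> \<and> (\<forall>i. i \<notin> {1..m} \<longrightarrow> \<beta> i = 0)"
    and q: "q = (\<Sum>\<beta>\<in>B. of_nat (d \<beta>) * eval_monomial m x \<beta>)"
    using assms(1) unfolding pos_poly_val_def by blast
  define shift where "shift \<beta> = (\<lambda>i. \<alpha> i + \<beta> i)" for \<beta> :: "nat \<Rightarrow> nat"
  define e where "e \<gamma> = c * d (\<lambda>i. \<gamma> i - \<alpha> i)" for \<gamma>
  have e_shift: "e (\<lambda>i. \<alpha> i + \<beta> i) = c * d \<beta>" for \<beta> by (simp add: e_def)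
  have "inj shift" by (rule injI) (simp add: shift_def fun_eq_iff)
  have "(\<Sum>\<gamma>\<in>shift ` B. of_nat (e \<gamma>) * eval_monomial m x \<gamma>) =
      (\<Sum>\<beta>\<in>B. of_nat (c * d \<beta>) * eval_monomial m x (shift \<beta>))"
    unfolding sum.reindex[OF inj_on_subset[OF \<open>inj shift\<close> subset_UNIV]] comp_def
    by (simp add: shift_def e_shift)
  also have "\<dots> = of_nat c * eval_monomial m x \<alpha> * q"
    unfolding q shift_def eval_monomial_add by (simp add: sum_distrib_left ac_simps)
  finally show ?thesis
    unfolding pos_poly_val_def using B assms(2,3)
    by (intro exI[of _ "shift ` B"] exI[of _ e]) (auto simp: e_shift shift_def)
qed

lemma pos_poly_val_mult:
  assumes "pos_poly_val m x p" "pos_poly_val m x q"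
  shows "pos_poly_val m x (p * q)"
proof -
  obtain A c where A: "finite A" "A \<noteq> {}" "\<forall>\<alpha>\<in>A. 0 < c \<alpha> \<and> (\<forall>i. i \<notin> {1..m} \<longrightarrow> \<alpha> i = 0)"
    and p: "p = (\<Sum>\<alpha>\<in>A. of_nat (c \<alpha>) * eval_monomial m x \<alpha>)"
    using assms(1) unfolding pos_poly_val_def by blast
  have "p * q = (\<Sum>\<alpha>\<in>A. of_nat (c \<alpha>) * eval_monomial m x \<alpha> * q)"
    unfolding p by (simp add: sum_distrib_right)
  also have "pos_poly_val m x \<dots>"
    using A assms(2) by (intro pos_poly_val_sum pos_poly_val_monomial_mult) auto
  finally show ?thesis .
qed

lemma of_nat_mem_subring: "subring_set K \<Longrightarrow> of_nat k \<in> K"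
proof (induction k)
  case 0
  then show ?case unfolding subring_set_def by (metis diff_self of_nat_0)
next
  case (Suc k)
  then show ?case unfolding subring_set_def by (metis of_nat_Suc add.commute)
qed

lemma pos_poly_val_nonzero:
  fixes x :: "nat \<Rightarrow> 'a::field_char_0"
  assumes "subring_set K" "alg_indep K m x" "pos_poly_val m x z"
  shows "z \<noteq> 0"
proof
  assume "z = 0"
  obtain A c where A: "finite A" "A \<noteq> {}" "\<forall>\<alpha>\<in>A. 0 < c \<alpha> \<and> (\<forall>i. i \<notin> {1..m} \<longrightarrow> \<alpha> i = 0)"
    and z: "z = (\<Sum>\<alpha>\<in>A. of_nat (c \<alpha>) * eval_monomial m x \<alpha>)"
    using assms(3) unfolding pos_poly_val_def by blast
  define coeff where "coeff \<alpha> = (if \<alpha> \<in> A then of_nat (c \<alpha>) else 0 :: 'a)" for \<alpha>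
  have support: "{\<alpha>. coeff \<alpha> \<noteq> 0} = A"
    using A(3) by (auto simp: coeff_def)
  have "(\<Sum>\<alpha>\<in>{\<alpha>. coeff \<alpha> \<noteq> 0}. coeff \<alpha> * (\<Prod>i\<in>{1..m}. x i ^ \<alpha> i)) = z"
    unfolding support z by (rule sum.cong) (auto simp: coeff_def eval_monomial_def)
  moreover have "\<forall>\<alpha>. coeff \<alpha> \<in> K"
    using of_nat_mem_subring[OF assms(1)] of_nat_mem_subring[OF assms(1), of 0]
    by (simp add: coeff_def)
  ultimately have "\<forall>\<alpha>. coeff \<alpha> = 0"
    using assms(2) support A \<open>z = 0\<close> unfolding alg_indep_def by blast
  then show False using support A(2) by auto
qed

definition pos_ratio :: "nat \<Rightarrow> (nat \<Rightarrow> 'a::field) \<Rightarrow> 'a \<Rightarrow> bool" where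
  "pos_ratio m x z \<longleftrightarrow> (\<exists>p q. pos_poly_val m x p \<and> pos_poly_val m x q \<and> z = p / q)"

lemma pos_ratio_one: "pos_ratio m x 1"
  unfolding pos_ratio_def using pos_poly_val_one[of m x] by (intro exI[of _ 1]) simp

lemma pos_ratio_var: "i \<in> {1..m} \<Longrightarrow> pos_ratio m x (x i)"
  unfolding pos_ratio_def using pos_poly_val_one[of m x] pos_poly_val_var[of i m x]
  by (intro exI[of _ "x i"] exI[of _ 1]) simp

lemma pos_ratio_mult:
  assumes "pos_ratio m x a" "pos_ratio m x b"
  shows "pos_ratio m x (a * b)"
proof -
  obtain p q p' q'
    where "pos_poly_val m x p" "pos_poly_val m x q" "pos_poly_val m x p'" "pos_poly_val m x q'"
    and "a * b = (p * p') / (q * q')"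
    using assms unfolding pos_ratio_def by auto
  then show ?thesis
    unfolding pos_ratio_def using pos_poly_val_mult by blast
qed

lemma pos_ratio_inverse:
  assumes "pos_ratio m x a"
  shows "pos_ratio m x (inverse a)"
proof -
  obtain p q where "pos_poly_val m x p" "pos_poly_val m x q" "a = p / q"
    using assms unfolding pos_ratio_def by blast
  then show ?thesis
    unfolding pos_ratio_def by (intro exI[of _ q] exI[of _ p]) simp
qed

context
  fixes K :: "'a::field_char_0 set" and m :: nat and x :: "nat \<Rightarrow> 'a"
  assumes K: "subring_set K" and indep: "alg_indep K m x"
begin

lemma pos_ratio_nonzero: "pos_ratio m x z \<Longrightarrow> z \<noteq> 0"
  unfolding pos_ratio_def using pos_poly_val_nonzero[OF K indep] by fastforce

lemma pos_ratio_add: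
  assumes "pos_ratio m x a" "pos_ratio m x b"
  shows "pos_ratio m x (a + b)"
proof -
  obtain p q p' q'
    where pq: "pos_poly_val m x p" "pos_poly_val m x q" "pos_poly_val m x p'" "pos_poly_val m x q'"
    and ab: "a = p / q" "b = p' / q'"
    using assms unfolding pos_ratio_def by blast
  have "q \<noteq> 0" "q' \<noteq> 0"
    using pos_poly_val_nonzero[OF K indep pq(2)] pos_poly_val_nonzero[OF K indep pq(4)] .
  then have "a + b = (p * q' + p' * q) / (q * q')"
    unfolding ab by (simp add: add_frac_eq)
  moreover have "pos_poly_val m x (p * q' + p' * q)" "pos_poly_val m x (q * q')"
    using pq by (simp_all add: pos_poly_val_add pos_poly_val_mult)
  ultimately show ?thesis
    unfolding pos_ratio_def by blast
qed

end

definition x_grid :: "nat \<Rightarrow> (nat \<Rightarrow> 'a::field) \<Rightarrow> nat \<Rightarrow> nat \<Rightarrow> 'a" where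
  "x_grid n x u v = xA n x (int v - int u) u"

lemma x_grid_diag: "x_grid n x u u = 1"
  by (simp add: x_grid_def xA_def)

lemma x_grid_below_diag: "x_grid n x (Suc u) u = 0"
  by (simp add: x_grid_def xA_def)

lemma x_grid_above_diag: "u < v \<Longrightarrow> x_grid n x u v = fst (seedA n x u) (v - u)"
  by (simp add: x_grid_def xA_def nat_diff_distrib)

context
  fixes K :: "'a::field_char_0 set" and n :: nat and x :: "nat \<Rightarrow> 'a"
  assumes K: "subring_set K" and indep: "alg_indep K (n + 1) x"
begin

lemma seedA_pos_ratio:
  "r \<le> n \<Longrightarrow> 1 \<le> k \<Longrightarrow> k \<le> n + 1 - r \<Longrightarrow> pos_ratio (n + 1) x (fst (seedA n x r) k)"
proof (induction r arbitrary: k)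
  case 0
  then show ?case by (simp add: pos_ratio_var)
next
  case (Suc r)
  have r: "r < n" using Suc.prems by simp
  have old: "pos_ratio (n + 1) x (fst (seedA n x r) j)" if "1 \<le> j" "j \<le> n - r + 1" for j
    using Suc.IH r that by simp
  have "pos_ratio (n + 1) x (fst (seedA n x (Suc r)) j)" if "1 \<le> j" "j \<le> n - r" for j
    using that
  proof (induction j)
    case 0
    then show ?case by simp
  next
    case (Suc j)
    have "pos_ratio (n + 1) x (if Suc j = 1 then 1 else fst (seedA n x (Suc r)) (Suc j - 1))"
      using Suc pos_ratio_one by auto
    then show ?case
      unfolding seedA_exchange[OF r Suc.prems]
      using old Suc.prems
      by (intro pos_ratio_mult pos_ratio_inverse pos_ratio_add[OF K indep] pos_ratio_one) auto
  qed
  then show ?case using Suc.prems by simp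
qed

lemma seedA_nonzero: "r \<le> n \<Longrightarrow> 1 \<le> k \<Longrightarrow> k \<le> n + 1 - r \<Longrightarrow> fst (seedA n x r) k \<noteq> 0"
  using seedA_pos_ratio pos_ratio_nonzero[OF K indep] by blast

lemma x_grid_unimodular:
  assumes "u \<le> v" "v \<le> n"
  shows "x_grid n x (u + 1) (v + 1) * x_grid n x u v -
    x_grid n x (u + 1) v * x_grid n x u (v + 1) = 1"
proof (cases "u = v")
  case True
  then show ?thesis by (simp add: x_grid_diag x_grid_below_diag)
next
  case False
  define k where "k = v - u"
  have k: "1 \<le> k" "k \<le> n - u" and "u < n"
    using assms False by (auto simp: k_def)
  have "x_grid n x (u + 1) (v + 1) = fst (seedA n x (Suc u)) k"
    and "x_grid n x u v = fst (seedA n x u) k"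
    and "x_grid n x u (v + 1) = fst (seedA n x u) (k + 1)"
    using assms False by (simp_all add: x_grid_above_diag k_def Suc_diff_le)
  moreover have "x_grid n x (u + 1) v = (if k = 1 then 1 else fst (seedA n x (Suc u)) (k - 1))"
  proof (cases "k = 1")
    case True
    then have "v = u + 1" using False assms by (simp add: k_def)
    then show ?thesis using True by (simp add: x_grid_diag)
  qed (use assms False in \<open>simp add: k_def x_grid_above_diag\<close>)
  moreover have "fst (seedA n x u) k \<noteq> 0"
    using seedA_nonzero \<open>u < n\<close> k by simp
  ultimately show ?thesis
    unfolding seedA_exchange[OF \<open>u < n\<close> k] by (simp add: field_simps)
qed

lemma x_grid_nonzero: "u < v \<Longrightarrow> v \<le> n \<Longrightarrow> x_grid n x (Suc u) v \<noteq> 0"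
  using seedA_nonzero[of "Suc u" "v - Suc u"]
  by (cases "v = Suc u") (simp_all add: x_grid_diag x_grid_above_diag)

lemma x_grid_recurrence:
  assumes "u \<le> v" "1 \<le> v" "v \<le> n"
  shows "x_grid n x u (v + 1) + x_grid n x u (v - 1) = x_grid n x v (v + 1) * x_grid n x u v"
  using assms(1)
proof (induction u rule: inc_induct)
  case base
  have "x_grid n x v (v - 1) = 0"
    using assms(2) x_grid_below_diag[of n x "v - 1"] by simp
  then show ?case by (simp add: x_grid_diag)
next
  case (step u)
  let ?X = "x_grid n x" and ?c = "x_grid n x v (v + 1)"
  have "?X (u + 1) v * (?X u (v + 1) + ?X u (v - 1)) =
      (?X (u + 1) (v + 1) + ?X (u + 1) (v - 1)) * ?X u v"
    using x_grid_unimodular[of u v] x_grid_unimodular[of u "v - 1"] step.hyps assms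
    by (simp add: algebra_simps)
  also have "\<dots> = ?X (u + 1) v * (?c * ?X u v)"
    using step.IH by simp
  finally show ?case
    using x_grid_nonzero[of u v] step.hyps assms by simp
qed

end

theorem corollary7p2:
  fixes K :: "'a::field_char_0 set" and n :: nat and x :: "nat \<Rightarrow> 'a"
  assumes "n \<ge> 1"
    and "subring_set K"
    and "alg_indep K (n + 1) x"
  shows "\<forall>i::nat. i \<le> (n + 1) - 2 \<longrightarrow>
           xA n x (int i + 2) 0 = xA n x 1 (i + 1) * xA n x (int i + 1) 0 - xA n x (int i) 0
         \<and> xA n x (int i + 1) 1 = xA n x 1 (i + 1) * xA n x (int i) 1 - xA n x (int i - 1) 1"
proof -
  have "x_grid n x u (i + 2) = x_grid n x (i + 1) (i + 2) * x_grid n x u (i + 1) - x_grid n x u i"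
    if "i \<le> (n + 1) - 2" "u \<le> 1" for i u
    using x_grid_recurrence[OF assms(2,3), of u "i + 1"] that assms(1) by (simp add: eq_diff_eq)
  from this[of _ 0] this[of _ 1] show ?thesis
    by (simp add: x_grid_def ac_simps)
qed

end
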